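(* Let $X$ be a dendric shift over $\mathcal{A}_3=\{1,2,3\}$, let $\sigma\in\mathrm{DP}(X)$ and let $Y$ be the image of $X$ under $\sigma$. If $\mathcal{C}^-(Y)=\emptyset$, then $\mathcal{C}^-(X)=\emptyset$ and $\sigma$ is left-invariant. Respectively, if $\mathcal{C}^+(Y)=\emptyset$, then $\mathcal{C}^+(X)=\emptyset$ and $\sigma$ is right-invariant.
   Context: A shift space over $\mathcal{A}$ is a closed shift-invariant $X\subseteq\mathcal{A}^{\mathbb{Z}}$ in which all letters occur, with factor set $\mathcal{L}(X)$. For $w\in\mathcal{L}(X)$, $\mathcal{E}_X(w)$ is the bipartite graph with left vertices $a^-$ ($aw\in\mathcal{L}(X)$), right vertices $b^+$ ($wb\in\mathcal{L}(X)$), edges $\{a^-,b^+\}$ ($awb\in\mathcal{L}(X)$); $w$ is bispecial if it has at least two left and two right vertices, dendric if $\mathcal{E}_X(w)$ is a tree; $X$ is dendric if all factors are. $\mathcal{C}^-_X(w)$ (resp. $\mathcal{C}^+_X(w)$): letters $a$ such that removing $a^-$ (resp. $a^+$) and the resulting isolated vertices from $\mathcal{E}_X(w)$ leaves a disconnected graph; $\mathcal{C}^\pm(X)=\bigcup_{w\in\mathcal{L}(X)}\mathcal{C}^\pm_X(w)$. $\mathcal{S}_3=\{\alpha,\beta,\gamma,\eta\}\cup\{\delta^{(k)},\zeta^{(k)}:k\ge1\}$ with $\alpha:1\mapsto1,2\mapsto12,3\mapsto13$; $\beta:1\mapsto1,2\mapsto12,3\mapsto132$; $\gamma:1\mapsto1,2\mapsto12,3\mapsto123$;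 $\delta^{(k)}:1\mapsto1,2\mapsto123^k,3\mapsto123^{k+1}$; $\zeta^{(k)}:1\mapsto13^k,2\mapsto12,3\mapsto13^{k+1}$; $\eta:1\mapsto13,2\mapsto12,3\mapsto123$. $\sigma$ is left-invariant (right-invariant) if all longest common suffixes (prefixes) of $\sigma(a_1),\sigma(a_2)$, $a_1\ne a_2$, coincide. Image of $X$: $Y=\{S^k\sigma(x):x\in X,0\le k<|\sigma(x_0)|\}$. For non-empty $u\in\mathcal{L}(Y)$ containing $1$ there is a unique triple $(s,v,p)$, $v\in\mathcal{L}(X)$, $u=s\sigma(v)p$, with $s$ a proper suffix of $\sigma(a)$ and $p$ a non-empty prefix of $\sigma(b)$ for some $a,b$ with $avb\in\mathcal{L}(X)$; $u$ is an extended image of $v$. $\mathrm{DP}(X)$: set of $\sigma\in\mathcal{S}_3$ such that every bispecial extended image (in $Y$) of every $v\in\mathcal{L}(X)$ is dendric. *)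

theory Defs
  imports "HOL-Analysis.Analysis" "HOL-Library.Sublist"
begin

text \<open>Points of the full shift are bi-infinite sequences \<open>int \<Rightarrow> nat\<close>; the
topology is the product topology (HOL-Analysis.Function_Topology) of the
discrete topology on \<open>nat\<close>.\<close>

definition shift :: "(int \<Rightarrow> nat) \<Rightarrow> (int \<Rightarrow> nat)" where
  "shift x = (\<lambda>i. x (i + 1))"

definition shift_space :: "nat set \<Rightarrow> (int \<Rightarrow> nat) set \<Rightarrow> bool" where
  "shift_space A X \<longleftrightarrow>
     (\<forall>x\<in>X. \<forall>i. x i \<in> A) \<and> closed X \<and> shift ` X = X \<and>
     (\<forall>a\<in>A. \<exists>x\<in>X. \<exists>i. x i = a)"

definition lang :: "(int \<Rightarrow> nat) set \<Rightarrow> nat list set" where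
  "lang X = {w. \<exists>x\<in>X. \<exists>i::int. \<forall>j<length w. x (i + int j) = w ! j}"

definition gwalk :: "'v set \<Rightarrow> ('v \<Rightarrow> 'v \<Rightarrow> bool) \<Rightarrow> 'v list \<Rightarrow> bool" where
  "gwalk V E xs \<longleftrightarrow> xs \<noteq> [] \<and> set xs \<subseteq> V \<and>
     (\<forall>i. i + 1 < length xs \<longrightarrow> E (xs ! i) (xs ! (i + 1)))"

definition gconnected :: "'v set \<Rightarrow> ('v \<Rightarrow> 'v \<Rightarrow> bool) \<Rightarrow> bool" where
  "gconnected V E \<longleftrightarrow>
     (\<forall>u\<in>V. \<forall>v\<in>V. \<exists>xs. gwalk V E xs \<and> hd xs = u \<and> last xs = v)"

definition gcycle :: "'v set \<Rightarrow> ('v \<Rightarrow> 'v \<Rightarrow> bool) \<Rightarrow> 'v list \<Rightarrow> bool" where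
  "gcycle V E xs \<longleftrightarrow> gwalk V E xs \<and> length xs \<ge> 4 \<and> hd xs = last xs \<and> distinct (tl xs)"

definition gtree :: "'v set \<Rightarrow> ('v \<Rightarrow> 'v \<Rightarrow> bool) \<Rightarrow> bool" where
  "gtree V E \<longleftrightarrow> gconnected V E \<and> \<not> (\<exists>xs. gcycle V E xs)"

text \<open>Left vertex \<open>a\<^sup>-\<close> is \<open>Inl a\<close>, right vertex \<open>b\<^sup>+\<close> is \<open>Inr b\<close>.\<close>

definition ext_left :: "(int \<Rightarrow> nat) set \<Rightarrow> nat list \<Rightarrow> nat set" where
  "ext_left X w = {a. a # w \<in> lang X}"

definition ext_right :: "(int \<Rightarrow> nat) set \<Rightarrow> nat list \<Rightarrow> nat set" where
  "ext_right X w = {b. w @ [b] \<in> lang X}"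

definition ext_vertices :: "(int \<Rightarrow> nat) set \<Rightarrow> nat list \<Rightarrow> (nat + nat) set" where
  "ext_vertices X w = Inl ` ext_left X w \<union> Inr ` ext_right X w"

fun ext_adj :: "(int \<Rightarrow> nat) set \<Rightarrow> nat list \<Rightarrow> nat + nat \<Rightarrow> nat + nat \<Rightarrow> bool" where
  "ext_adj X w (Inl a) (Inr b) = (a # w @ [b] \<in> lang X)"
| "ext_adj X w (Inr b) (Inl a) = (a # w @ [b] \<in> lang X)"
| "ext_adj X w _ _ = False"

definition bispecial :: "(int \<Rightarrow> nat) set \<Rightarrow> nat list \<Rightarrow> bool" where
  "bispecial X w \<longleftrightarrow>
     (\<exists>a1 a2. a1 \<noteq> a2 \<and> a1 \<in> ext_left X w \<and> a2 \<in> ext_left X w) \<and>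
     (\<exists>b1 b2. b1 \<noteq> b2 \<and> b1 \<in> ext_right X w \<and> b2 \<in> ext_right X w)"

definition dendric_word :: "(int \<Rightarrow> nat) set \<Rightarrow> nat list \<Rightarrow> bool" where
  "dendric_word X w \<longleftrightarrow> gtree (ext_vertices X w) (ext_adj X w)"

definition dendric_shift :: "(int \<Rightarrow> nat) set \<Rightarrow> bool" where
  "dendric_shift X \<longleftrightarrow> (\<forall>w\<in>lang X. dendric_word X w)"

text \<open>Removing a vertex and the vertices that become isolated.\<close>

definition remove_vertex :: "'v set \<Rightarrow> ('v \<Rightarrow> 'v \<Rightarrow> bool) \<Rightarrow> 'v \<Rightarrow> 'v set" where
  "remove_vertex V E v = {u \<in> V - {v}. \<exists>u'\<in>V - {v}. E u u'}"

definition C_left_word :: "(int \<Rightarrow> nat) set \<Rightarrow> nat list \<Rightarrow> nat set" where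
  "C_left_word X w = {a \<in> ext_left X w.
     \<not> gconnected (remove_vertex (ext_vertices X w) (ext_adj X w) (Inl a)) (ext_adj X w)}"

definition C_right_word :: "(int \<Rightarrow> nat) set \<Rightarrow> nat list \<Rightarrow> nat set" where
  "C_right_word X w = {b \<in> ext_right X w.
     \<not> gconnected (remove_vertex (ext_vertices X w) (ext_adj X w) (Inr b)) (ext_adj X w)}"

definition C_left :: "(int \<Rightarrow> nat) set \<Rightarrow> nat set" where
  "C_left X = (\<Union>w\<in>lang X. C_left_word X w)"

definition C_right :: "(int \<Rightarrow> nat) set \<Rightarrow> nat set" where
  "C_right X = (\<Union>w\<in>lang X. C_right_word X w)"

text \<open>Substitutions are maps \<open>nat \<Rightarrow> nat list\<close>; only the values on 1,2,3 matter
(other letters are sent to the empty word).\<close>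

definition subst3 :: "nat list \<Rightarrow> nat list \<Rightarrow> nat list \<Rightarrow> nat \<Rightarrow> nat list" where
  "subst3 u1 u2 u3 = (\<lambda>a. if a = 1 then u1 else if a = 2 then u2 else if a = 3 then u3 else [])"

definition alpha_s :: "nat \<Rightarrow> nat list" where "alpha_s = subst3 [1] [1,2] [1,3]"
definition beta_s :: "nat \<Rightarrow> nat list" where "beta_s = subst3 [1] [1,2] [1,3,2]"
definition gamma_s :: "nat \<Rightarrow> nat list" where "gamma_s = subst3 [1] [1,2] [1,2,3]"
definition delta_s :: "nat \<Rightarrow> nat \<Rightarrow> nat list" where
  "delta_s k = subst3 [1] ([1,2] @ replicate k 3) ([1,2] @ replicate (k+1) 3)"
definition zeta_s :: "nat \<Rightarrow> nat \<Rightarrow> nat list" where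
  "zeta_s k = subst3 (1 # replicate k 3) [1,2] (1 # replicate (k+1) 3)"
definition eta_s :: "nat \<Rightarrow> nat list" where "eta_s = subst3 [1,3] [1,2] [1,2,3]"

definition S3 :: "(nat \<Rightarrow> nat list) set" where
  "S3 = {alpha_s, beta_s, gamma_s, eta_s} \<union> {delta_s k | k. k \<ge> 1} \<union> {zeta_s k | k. k \<ge> 1}"

fun lcp :: "'a list \<Rightarrow> 'a list \<Rightarrow> 'a list" where
  "lcp (x # xs) (y # ys) = (if x = y then x # lcp xs ys else [])"
| "lcp _ _ = []"

definition lcs :: "'a list \<Rightarrow> 'a list \<Rightarrow> 'a list" where
  "lcs xs ys = rev (lcp (rev xs) (rev ys))"

definition left_invariant :: "(nat \<Rightarrow> nat list) \<Rightarrow> bool" where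
  "left_invariant \<sigma> \<longleftrightarrow> (\<forall>a1\<in>{1,2,3}. \<forall>a2\<in>{1,2,3}. \<forall>b1\<in>{1,2,3}. \<forall>b2\<in>{1,2,3}.
     a1 \<noteq> a2 \<longrightarrow> b1 \<noteq> b2 \<longrightarrow> lcs (\<sigma> a1) (\<sigma> a2) = lcs (\<sigma> b1) (\<sigma> b2))"

definition right_invariant :: "(nat \<Rightarrow> nat list) \<Rightarrow> bool" where
  "right_invariant \<sigma> \<longleftrightarrow> (\<forall>a1\<in>{1,2,3}. \<forall>a2\<in>{1,2,3}. \<forall>b1\<in>{1,2,3}. \<forall>b2\<in>{1,2,3}.
     a1 \<noteq> a2 \<longrightarrow> b1 \<noteq> b2 \<longrightarrow> lcp (\<sigma> a1) (\<sigma> a2) = lcp (\<sigma> b1) (\<sigma> b2))"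

text \<open>\<open>cumlen \<sigma> x m\<close> is the position in \<open>\<sigma>(x)\<close> where the block \<open>\<sigma>(x_m)\<close> starts,
with \<open>\<sigma>(x_0)\<close> starting at position 0.\<close>

definition cumlen :: "(nat \<Rightarrow> nat list) \<Rightarrow> (int \<Rightarrow> nat) \<Rightarrow> int \<Rightarrow> int" where
  "cumlen \<sigma> x m =
     (if m \<ge> 0 then int (\<Sum>j<nat m. length (\<sigma> (x (int j))))
      else - int (\<Sum>j\<in>{1..nat (- m)}. length (\<sigma> (x (- int j)))))"

text \<open>\<open>subst_image \<sigma> X = {S^k \<sigma>(x) : x \<in> X, 0 \<le> k < |\<sigma>(x_0)|}\<close>.\<close>

definition subst_image :: "(nat \<Rightarrow> nat list) \<Rightarrow> (int \<Rightarrow> nat) set \<Rightarrow> (int \<Rightarrow> nat) set" where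
  "subst_image \<sigma> X = {y. \<exists>x\<in>X. \<exists>k. k < length (\<sigma> (x 0)) \<and>
     (\<forall>m. \<forall>j<length (\<sigma> (x m)). y (cumlen \<sigma> x m + int j - int k) = \<sigma> (x m) ! j)}"

definition extended_image :: "(nat \<Rightarrow> nat list) \<Rightarrow> (int \<Rightarrow> nat) set \<Rightarrow> nat list \<Rightarrow> nat list \<Rightarrow> bool" where
  "extended_image \<sigma> X u v \<longleftrightarrow>
     u \<in> lang (subst_image \<sigma> X) \<and> u \<noteq> [] \<and> 1 \<in> set u \<and> v \<in> lang X \<and>
     (\<exists>s p a b. u = s @ concat (map \<sigma> v) @ p \<and> strict_suffix s (\<sigma> a) \<and>
        p \<noteq> [] \<and> prefix p (\<sigma> b) \<and> a # v @ [b] \<in> lang X)"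

definition DP :: "(int \<Rightarrow> nat) set \<Rightarrow> (nat \<Rightarrow> nat list) set" where
  "DP X = {\<sigma> \<in> S3. \<forall>v\<in>lang X. \<forall>u. extended_image \<sigma> X u v \<and> bispecial (subst_image \<sigma> X) u
              \<longrightarrow> dendric_word (subst_image \<sigma> X) u}"

end

theory Submission
  imports Defs
begin

text \<open>
  Every image \<open>\<sigma>(a)\<close> of a substitution in \<open>S\<^sub>3\<close> starts with 1, so the two-letter factors
  of the image \<open>Y\<close> are exactly those of the words \<open>\<sigma>(a) 1\<close>. For the substitutions that are
  not left-invariant (\<open>\<beta>\<close>, \<open>\<delta>\<^sub>k\<close>, \<open>\<zeta>\<^sub>k\<close>, \<open>\<eta>\<close>) these factors already show that removing a
  suitable left vertex disconnects the extension graph of the empty word of \<open>Y\<close>, so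
  \<open>C\<^sup>-(Y) \<noteq> {}\<close> and the left claim is vacuous; symmetrically on the right for \<open>\<gamma>\<close>,
  \<open>\<delta>\<^sub>k\<close>, \<open>\<zeta>\<^sub>k\<close>, \<open>\<eta>\<close>.

  In the remaining cases (\<open>\<alpha>\<close>, \<open>\<gamma>\<close> on the left, \<open>\<alpha>\<close>, \<open>\<beta>\<close> on the right) the substitution
  is invariant on that side, and we show e.g. \<open>C\<^sup>-(X) \<subseteq> C\<^sup>-(Y)\<close>. In a tree, removing \<open>a\<^sup>-\<close>
  disconnects the graph iff \<open>a\<^sup>-\<close> has two distinct neighbours that both have a further
  neighbour. Such a configuration in the extension graph of \<open>w\<close> in \<open>X\<close> is carried by \<open>\<sigma>\<close> to a
  configuration of the same shape around \<open>a\<^sup>-\<close> in the extension graph of a suitable extended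
  image \<open>u\<close> of \<open>w\<close>; hence \<open>u\<close> is bispecial, thus dendric because \<open>\<sigma> \<in> DP(X)\<close>, and
  \<open>a \<in> C\<^sup>-(Y)\<close>.
\<close>

lemma letter_in_alphabet: "shift_space A X \<Longrightarrow> x \<in> X \<Longrightarrow> x i \<in> A"
  by (auto simp: shift_space_def)

lemma lang_subset_alphabet:
  assumes "shift_space A X" "w \<in> lang X"
  shows "set w \<subseteq> A"
proof
  fix c assume "c \<in> set w"
  then obtain j where j: "j < length w" "w ! j = c" by (auto simp: in_set_conv_nth)
  from assms(2) obtain x i where "x \<in> X" "\<forall>j<length w. x (i + int j) = w ! j"
    by (auto simp: lang_def)
  then show "c \<in> A" using j letter_in_alphabet[OF assms(1)] by metis
qed

lemma letter_in_lang: "shift_space A X \<Longrightarrow> a \<in> A \<Longrightarrow> [a] \<in> lang X"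
  unfolding shift_space_def lang_def by force

lemma lang_sublist:
  assumes "sublist v w" "w \<in> lang X"
  shows "v \<in> lang X"
proof -
  obtain p s where w: "w = p @ v @ s" using assms(1) by (auto simp: sublist_def)
  obtain x i where x: "x \<in> X" "\<forall>j<length w. x (i + int j) = w ! j"
    using assms(2) by (auto simp: lang_def)
  have "\<forall>j<length v. x (i + int (length p) + int j) = v ! j"
  proof (intro allI impI)
    fix j assume "j < length v"
    then show "x (i + int (length p) + int j) = v ! j"
      using x(2)[rule_format, of "length p + j"] by (auto simp: w nth_append add.assoc)
  qed
  then show ?thesis using x(1) unfolding lang_def by blast
qed

lemma lang_extend_right:
  assumes "w \<in> lang X"
  shows "\<exists>b. w @ [b] \<in> lang X"
proof -
  obtain x i where x: "x \<in> X" "\<forall>j<length w. x (i + int j) = w ! j"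
    using assms by (auto simp: lang_def)
  then have "\<forall>j<length (w @ [x (i + int (length w))]).
      x (i + int j) = (w @ [x (i + int (length w))]) ! j"
    by (auto simp: nth_append less_Suc_eq)
  then show ?thesis using x(1) unfolding lang_def by blast
qed

section \<open>The image of a shift space under a substitution\<close>

lemma cumlen_Suc: "cumlen \<sigma> x (m + 1) = cumlen \<sigma> x m + int (length (\<sigma> (x m)))"
proof (cases "m \<ge> 0")
  case True
  then have "nat (m + 1) = Suc (nat m)" by simp
  then show ?thesis using True by (simp add: cumlen_def)
next
  case False
  define n where "n = nat (- (m + 1))"
  have m: "m = - int n - 1" using False n_def by simp
  have "cumlen \<sigma> x (m + 1) = - int (\<Sum>j\<in>{1..n}. length (\<sigma> (x (- int j))))"
    using m by (cases "n = 0") (auto simp: cumlen_def)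
  moreover have "nat (- m) = Suc n" using m by simp
  then have "cumlen \<sigma> x m = - int (\<Sum>j\<in>{1..Suc n}. length (\<sigma> (x (- int j))))"
    using False by (simp add: cumlen_def)
  moreover have "- int (Suc n) = m" using m by simp
  ultimately show ?thesis by (simp add: sum.atLeast1_atMost_eq)
qed

lemma cumlen_less:
  assumes "m < m'"
  shows "cumlen \<sigma> x m + int (length (\<sigma> (x m))) \<le> cumlen \<sigma> x m'"
proof -
  have "cumlen \<sigma> x m + int (length (\<sigma> (x m))) \<le> cumlen \<sigma> x (m + 1 + int d)" for d
  proof (induction d)
    case (Suc d)
    then show ?case using cumlen_Suc[of \<sigma> x "m + 1 + int d"] by (simp add: add.assoc)
  qed (simp add: cumlen_Suc)
  from this[of "nat (m' - m - 1)"] show ?thesis using assms by simp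
qed

lemma cumlen_inj:
  assumes "j < length (\<sigma> (x m))" "j' < length (\<sigma> (x m'))"
    and "cumlen \<sigma> x m + int j = cumlen \<sigma> x m' + int j'"
  shows "m = m' \<and> j = j'"
  using cumlen_less[of m m' \<sigma> x] cumlen_less[of m' m \<sigma> x] assms
  by (cases m m' rule: linorder_cases) auto

lemma cumlen_surj:
  assumes "\<And>m. \<sigma> (x m) \<noteq> []"
  shows "\<exists>m j. j < length (\<sigma> (x m)) \<and> t = cumlen \<sigma> x m + int j"
proof (induction t rule: int_induct[where k=0])
  case base
  show ?case using assms[of 0] by (intro exI[of _ 0]) (auto simp: cumlen_def)
next
  case (step1 t)
  then obtain m j where mj: "j < length (\<sigma> (x m))" "t = cumlen \<sigma> x m + int j" by blast
  show ?case
  proof (cases "Suc j < length (\<sigma> (x m))")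
    case True then show ?thesis using mj by (intro exI[of _ m] exI[of _ "Suc j"]) auto
  next
    case False
    then have "t + 1 = cumlen \<sigma> x (m + 1) + int 0" using mj cumlen_Suc[of \<sigma> x m] by simp
    then show ?thesis using assms by blast
  qed
next
  case (step2 t)
  then obtain m j where mj: "j < length (\<sigma> (x m))" "t = cumlen \<sigma> x m + int j" by blast
  show ?case
  proof (cases "j > 0")
    case True then show ?thesis using mj by (intro exI[of _ m] exI[of _ "j - 1"]) auto
  next
    case False
    define l where "l = length (\<sigma> (x (m - 1)))"
    have "l > 0" using assms l_def by simp
    then have "int (l - 1) = int l - 1" by simp
    moreover have "cumlen \<sigma> x m = cumlen \<sigma> x (m - 1) + int l"
      using cumlen_Suc[of \<sigma> x "m - 1"] by (simp add: l_def)
    ultimately have "t - 1 = cumlen \<sigma> x (m - 1) + int (l - 1)" using mj False by simp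
    moreover have "l - 1 < l" using \<open>l > 0\<close> by simp
    ultimately show ?thesis unfolding l_def by blast
  qed
qed

text \<open>The letter at position \<open>n\<close> of \<open>\<sigma>(x)\<close>, the block \<open>\<sigma>(x\<^sub>m)\<close> starting at \<open>cumlen \<sigma> x m\<close>;
  at positions covered by no block the value is unspecified.\<close>

definition image_point :: "(nat \<Rightarrow> nat list) \<Rightarrow> (int \<Rightarrow> nat) \<Rightarrow> int \<Rightarrow> nat" where
  "image_point \<sigma> x n =
     (SOME c. \<exists>m j. j < length (\<sigma> (x m)) \<and> n = cumlen \<sigma> x m + int j \<and> c = \<sigma> (x m) ! j)"

lemma image_point_cumlen:
  assumes "j < length (\<sigma> (x m))"
  shows "image_point \<sigma> x (cumlen \<sigma> x m + int j) = \<sigma> (x m) ! j"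
  unfolding image_point_def
proof (rule someI2)
  fix c assume "\<exists>m' j'. j' < length (\<sigma> (x m')) \<and> cumlen \<sigma> x m + int j = cumlen \<sigma> x m' + int j'
    \<and> c = \<sigma> (x m') ! j'"
  then obtain m' j' where "j' < length (\<sigma> (x m'))" "cumlen \<sigma> x m + int j = cumlen \<sigma> x m' + int j'"
    "c = \<sigma> (x m') ! j'" by blast
  then show "c = \<sigma> (x m) ! j" using cumlen_inj[of j \<sigma> x m j' m'] assms by auto
qed (use assms in blast)

lemma image_point_in_subst_image:
  assumes "shift_space A X" "x \<in> X" "\<forall>a\<in>A. \<sigma> a \<noteq> []"
  shows "image_point \<sigma> x \<in> subst_image \<sigma> X"
proof -
  have "x 0 \<in> A" using letter_in_alphabet[OF assms(1,2)] .
  then have "0 < length (\<sigma> (x 0))" using assms(3) by simp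
  moreover have "\<forall>m. \<forall>j<length (\<sigma> (x m)).
      image_point \<sigma> x (cumlen \<sigma> x m + int j - int 0) = \<sigma> (x m) ! j"
    using image_point_cumlen by simp
  ultimately show ?thesis unfolding subst_image_def using assms(2) by blast
qed

lemma image_point_concat:
  assumes "\<forall>j<length z. x (i + int j) = z ! j" "n < length (concat (map \<sigma> z))"
  shows "image_point \<sigma> x (cumlen \<sigma> x i + int n) = concat (map \<sigma> z) ! n"
  using assms
proof (induction z arbitrary: i n)
  case (Cons a z)
  have xi: "x i = a" using Cons.prems(1)[rule_format, of 0] by simp
  show ?case
  proof (cases "n < length (\<sigma> a)")
    case True
    then show ?thesis using image_point_cumlen[of n \<sigma> x i] xi by (simp add: nth_append)
  next
    case False
    define n' where "n' = n - length (\<sigma> a)"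
    have "\<forall>j<length z. x (i + 1 + int j) = z ! j"
      using Cons.prems(1) by (auto simp: add.assoc dest: spec[of _ "Suc _"])
    moreover have "n' < length (concat (map \<sigma> z))" using Cons.prems(2) False n'_def by simp
    ultimately have "image_point \<sigma> x (cumlen \<sigma> x (i + 1) + int n') = concat (map \<sigma> z) ! n'"
      using Cons.IH by blast
    moreover have "cumlen \<sigma> x i + int n = cumlen \<sigma> x (i + 1) + int n'"
      using False n'_def xi cumlen_Suc[of \<sigma> x i] by simp
    ultimately have "image_point \<sigma> x (cumlen \<sigma> x i + int n) = concat (map \<sigma> z) ! n'"
      by simp
    then show ?thesis using False n'_def by (simp add: nth_append)
  qed
qed simp

lemma concat_map_in_lang_subst_image:
  assumes "shift_space A X" "\<forall>a\<in>A. \<sigma> a \<noteq> []" "z \<in> lang X"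
  shows "concat (map \<sigma> z) \<in> lang (subst_image \<sigma> X)"
proof -
  obtain x i where x: "x \<in> X" "\<forall>j<length z. x (i + int j) = z ! j"
    using assms(3) by (auto simp: lang_def)
  then show ?thesis
    using image_point_concat[OF x(2)] image_point_in_subst_image[OF assms(1) x(1) assms(2)]
    unfolding lang_def by blast
qed

definition images_start_with :: "(nat \<Rightarrow> nat list) \<Rightarrow> nat set \<Rightarrow> nat \<Rightarrow> bool" where
  "images_start_with \<sigma> A c \<longleftrightarrow> (\<forall>a\<in>A. \<exists>t. \<sigma> a = c # t)"

lemma S3_images_start_with_1: "\<sigma> \<in> S3 \<Longrightarrow> images_start_with \<sigma> {1,2,3} 1"
  by (auto simp: S3_def images_start_with_def alpha_s_def beta_s_def gamma_s_def delta_s_def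
      zeta_s_def eta_s_def subst3_def)

lemma image_of_extension_in_lang:
  assumes "shift_space A X" "images_start_with \<sigma> A c" "a # w @ [b] \<in> lang X"
  shows "drop i (\<sigma> a) @ concat (map \<sigma> w) @ take j (\<sigma> b @ [c]) \<in> lang (subst_image \<sigma> X)"
proof -
  obtain d where d: "a # w @ [b, d] \<in> lang X" using lang_extend_right[OF assms(3)] by auto
  then have "d \<in> A" using lang_subset_alphabet[OF assms(1)] by force
  then obtain t where t: "\<sigma> d = c # t" using assms(2) by (auto simp: images_start_with_def)
  have "\<forall>a\<in>A. \<sigma> a \<noteq> []" using assms(2) by (auto simp: images_start_with_def)
  from concat_map_in_lang_subst_image[OF assms(1) this d]
  have "\<sigma> a @ concat (map \<sigma> w) @ (\<sigma> b @ [c]) @ t \<in> lang (subst_image \<sigma> X)"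
    by (simp add: t)
  moreover have "sublist (drop i (\<sigma> a) @ concat (map \<sigma> w) @ take j (\<sigma> b @ [c]))
      (\<sigma> a @ concat (map \<sigma> w) @ (\<sigma> b @ [c]) @ t)"
    by (metis append.assoc append_take_drop_id sublist_appendI)
  ultimately show ?thesis using lang_sublist by blast
qed

lemma sublist_nth_Suc:
  assumes "Suc j < length l"
  shows "sublist [l ! j, l ! Suc j] l"
proof -
  have "take j l @ [l ! j, l ! Suc j] @ drop (Suc (Suc j)) l = l"
    using assms by (simp add: Cons_nth_drop_Suc)
  then show ?thesis by (metis sublist_appendI)
qed

lemma two_factor_of_subst_image:
  assumes ss: "shift_space A X" and start: "images_start_with \<sigma> A c"
    and de: "[d, e] \<in> lang (subst_image \<sigma> X)"
  shows "\<exists>a\<in>A. sublist [d, e] (\<sigma> a @ [c])"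
proof -
  obtain y i where y: "y \<in> subst_image \<sigma> X" "y i = d" "y (i + 1) = e"
    using de unfolding lang_def by (force dest: spec[of _ 0] spec[of _ 1])
  then obtain x k where x: "x \<in> X"
    "\<forall>m. \<forall>j<length (\<sigma> (x m)). y (cumlen \<sigma> x m + int j - int k) = \<sigma> (x m) ! j"
    unfolding subst_image_def by blast
  have xA: "\<And>m. x m \<in> A" using ss x(1) letter_in_alphabet by metis
  then have start_x: "\<And>m. \<exists>t. \<sigma> (x m) = c # t" using start by (auto simp: images_start_with_def)
  then have "\<And>m. \<sigma> (x m) \<noteq> []" by (metis list.distinct(1))
  then obtain m j where mj: "j < length (\<sigma> (x m))" "i + int k = cumlen \<sigma> x m + int j"
    using cumlen_surj by blast
  have y_block: "\<And>m j. j < length (\<sigma> (x m)) \<Longrightarrow> y (cumlen \<sigma> x m + int j - int k) = \<sigma> (x m) ! j"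
    using x(2) by blast
  let ?l = "\<sigma> (x m) @ [c]"
  have "cumlen \<sigma> x m + int j - int k = i" using mj by simp
  from y_block[OF mj(1), unfolded this] have "d = ?l ! j" using y(2) mj(1) by (simp add: nth_append)
  moreover have "e = ?l ! Suc j"
  proof (cases "Suc j < length (\<sigma> (x m))")
    case True
    have "cumlen \<sigma> x m + int (Suc j) - int k = i + 1" using mj by simp
    from y_block[OF True, unfolded this] show ?thesis using y(3) True by (simp add: nth_append)
  next
    case False
    obtain t where t: "\<sigma> (x (m + 1)) = c # t" using start_x by blast
    have "cumlen \<sigma> x (m + 1) + int 0 - int k = i + 1"
      using False mj cumlen_Suc[of \<sigma> x m] by simp
    from y_block[of 0 "m + 1", unfolded this] have "e = c" using y(3) t by simp
    then show ?thesis using False mj by (simp add: nth_append)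
  qed
  ultimately show ?thesis using sublist_nth_Suc[of j ?l] mj xA by auto
qed

lemma two_factors_subst_image_iff:
  assumes ss: "shift_space A X" and start: "images_start_with \<sigma> A c"
  shows "[d, e] \<in> lang (subst_image \<sigma> X) \<longleftrightarrow> (\<exists>a\<in>A. sublist [d, e] (\<sigma> a @ [c]))"
proof
  assume "\<exists>a\<in>A. sublist [d, e] (\<sigma> a @ [c])"
  then obtain a where a: "a \<in> A" "sublist [d, e] (\<sigma> a @ [c])" by blast
  obtain b where b: "[a] @ [b] \<in> lang X" using lang_extend_right letter_in_lang[OF ss a(1)] by blast
  then have "b \<in> A" using lang_subset_alphabet[OF ss] by force
  then obtain t where "\<sigma> b = c # t" using start by (auto simp: images_start_with_def)
  then have "\<sigma> a @ [c] \<in> lang (subst_image \<sigma> X)"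
    using image_of_extension_in_lang[OF ss start, of a "[]" b 0 1] b by simp
  then show "[d, e] \<in> lang (subst_image \<sigma> X)" using a(2) lang_sublist by blast
qed (rule two_factor_of_subst_image[OF ss start])

section \<open>Cut vertices of trees\<close>

lemma gwalk_iff_successively: "gwalk V E xs \<longleftrightarrow> xs \<noteq> [] \<and> set xs \<subseteq> V \<and> successively E xs"
  by (auto simp: gwalk_def successively_conv_nth)

lemma gwalk_Cons:
  "gwalk V E (u # xs) \<longleftrightarrow> u \<in> V \<and> (xs = [] \<or> E u (hd xs) \<and> gwalk V E xs)"
  by (auto simp: gwalk_iff_successively successively_Cons)

lemma gwalk_rev:
  assumes "symp E"
  shows "gwalk V E (rev xs) \<longleftrightarrow> gwalk V E xs"
proof -
  have "successively (\<lambda>u w. E w u) xs \<longleftrightarrow> successively E xs"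
    using assms by (auto elim!: successively_mono dest: sympD)
  then show ?thesis by (simp add: gwalk_iff_successively)
qed

lemma gwalk_distinct:
  assumes "gwalk V E xs"
  shows "\<exists>ys. gwalk V E ys \<and> hd ys = hd xs \<and> last ys = last xs \<and> distinct ys"
  using assms
proof (induction "length xs" arbitrary: xs rule: less_induct)
  case less
  show ?case
  proof (cases "distinct xs")
    case False
    then obtain as y bs cs where xs: "xs = as @ [y] @ bs @ [y] @ cs"
      using not_distinct_decomp by blast
    let ?xs' = "as @ y # cs"
    have walk: "set xs \<subseteq> V" "successively E xs"
      using less.prems by (auto simp: gwalk_iff_successively)
    have "successively E ((as @ [y]) @ (bs @ y # cs))" "successively E ((as @ [y] @ bs) @ (y # cs))"
      using walk(2) by (simp_all add: xs)
    then have "successively E (as @ [y])" "successively E (y # cs)"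
      unfolding successively_append_iff by blast+
    then have "gwalk V E ?xs'"
      using walk(1) by (auto simp: xs gwalk_iff_successively successively_append_iff)
    moreover have "length ?xs' < length xs" by (simp add: xs)
    moreover have "hd ?xs' = hd xs" "last ?xs' = last xs" by (simp_all add: xs hd_append)
    ultimately show ?thesis using less.hyps by metis
  qed (use less.prems in blast)
qed

lemma gwalk_remove_vertex:
  assumes sym: "symp E"
    and "gwalk (V - {v}) E xs" "hd xs \<in> remove_vertex V E v"
  shows "gwalk (remove_vertex V E v) E xs"
  using assms(2,3)
proof (induction xs)
  case (Cons u xs)
  show ?case
  proof (cases xs)
    case (Cons u' xs')
    then have "E u' u" "u \<in> V - {v}" "u' \<in> V - {v}"
      using Cons.prems(1) sym by (auto simp: gwalk_Cons dest: sympD)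
    then have "hd xs \<in> remove_vertex V E v" unfolding remove_vertex_def using Cons by auto
    then show ?thesis using Cons.IH Cons.prems by (auto simp: gwalk_Cons)
  qed (use Cons.prems in \<open>auto simp: gwalk_Cons\<close>)
qed (simp add: gwalk_def)

lemma gwalk_last_in_closed:
  assumes "gwalk V E xs" "hd xs \<in> S" "\<And>u v. u \<in> S \<Longrightarrow> v \<in> V \<Longrightarrow> E u v \<Longrightarrow> v \<in> S"
  shows "last xs \<in> S"
  using assms(1,2)
proof (induction xs)
  case (Cons u xs)
  then show ?case using assms(3) by (cases xs) (auto simp: gwalk_Cons)
qed (simp add: gwalk_def)

lemma remove_vertex_disconnected_neighbours:
  assumes sym: "symp E" and conn: "gconnected V E"
    and disconn: "\<not> gconnected (remove_vertex V E v) E"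
  shows "\<exists>u1 u2. u1 \<noteq> u2 \<and> E v u1 \<and> E v u2 \<and>
    u1 \<in> remove_vertex V E v \<and> u2 \<in> remove_vertex V E v"
proof -
  let ?R = "remove_vertex V E v"
  obtain p q where pq: "p \<in> ?R" "q \<in> ?R"
    and no_walk: "\<And>xs. gwalk ?R E xs \<Longrightarrow> hd xs = p \<Longrightarrow> last xs \<noteq> q"
    using disconn unfolding gconnected_def by blast
  have R_sub: "?R \<subseteq> V - {v}" by (auto simp: remove_vertex_def)
  obtain ys where ys: "gwalk V E ys" "hd ys = p" "last ys = q" "distinct ys"
    using conn pq R_sub gwalk_distinct unfolding gconnected_def by (metis Diff_iff subsetD)
  have "v \<in> set ys"
  proof (rule ccontr)
    assume "v \<notin> set ys"
    then have "gwalk (V - {v}) E ys" using ys(1) by (auto simp: gwalk_def)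
    then show False using gwalk_remove_vertex[OF sym] no_walk ys(2,3) pq(1) by blast
  qed
  then obtain as bs where ys_split: "ys = as @ v # bs" by (meson split_list)
  have "as \<noteq> []" "bs \<noteq> []" using ys(2,3) pq R_sub ys_split by auto
  have walk: "gwalk V E (as @ v # bs)" using ys(1) ys_split by simp
  then have "E (last as) v" "E v (hd bs)"
    using \<open>as \<noteq> []\<close> \<open>bs \<noteq> []\<close>
    by (auto simp: gwalk_iff_successively successively_append_iff successively_Cons)
  have "v \<notin> set as" "v \<notin> set bs" "last as \<noteq> hd bs"
    using ys(4) ys_split last_in_set[OF \<open>as \<noteq> []\<close>] hd_in_set[OF \<open>bs \<noteq> []\<close>] by auto
  have "gwalk (V - {v}) E as" "gwalk (V - {v}) E bs"
    using walk \<open>as \<noteq> []\<close> \<open>bs \<noteq> []\<close> \<open>v \<notin> set as\<close> \<open>v \<notin> set bs\<close>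
    by (auto simp: gwalk_iff_successively successively_append_iff successively_Cons)
  then have "gwalk (V - {v}) E as" "gwalk (V - {v}) E (rev bs)" by (simp_all add: gwalk_rev[OF sym])
  moreover have "hd as = p" "hd (rev bs) = q"
    using ys(2,3) ys_split \<open>as \<noteq> []\<close> \<open>bs \<noteq> []\<close> by (auto simp: hd_rev)
  ultimately have "gwalk ?R E as" "gwalk ?R E (rev bs)"
    using gwalk_remove_vertex[OF sym] pq by auto
  then have "last as \<in> ?R" "hd bs \<in> ?R"
    using \<open>as \<noteq> []\<close> \<open>bs \<noteq> []\<close> by (auto simp: gwalk_def last_rev)
  then show ?thesis
    using \<open>E (last as) v\<close> \<open>E v (hd bs)\<close> \<open>last as \<noteq> hd bs\<close> sym by (metis sympD)
qed

lemma tree_remove_vertex_disconnected: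
  assumes sym: "symp E" and tree: "gtree V E" and "v \<in> V"
    and "u1 \<noteq> u2" "E v u1" "E v u2" "u1 \<in> remove_vertex V E v" "u2 \<in> remove_vertex V E v"
  shows "\<not> gconnected (remove_vertex V E v) E"
proof
  let ?R = "remove_vertex V E v"
  assume "gconnected ?R E"
  then obtain ys where ys: "gwalk ?R E ys" "hd ys = u1" "last ys = u2" "distinct ys"
    using assms(7,8) gwalk_distinct unfolding gconnected_def by metis
  have "set ys \<subseteq> V" "v \<notin> set ys" using ys(1) by (auto simp: gwalk_def remove_vertex_def)
  obtain y ys' where ys_Cons: "ys = y # ys'" using ys(1) by (cases ys) (auto simp: gwalk_def)
  with ys(2,3) \<open>u1 \<noteq> u2\<close> have "ys' \<noteq> []" by auto
  define cyc where "cyc = v # ys @ [v]"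
  have "successively E (ys @ [v])"
    using ys(1,3) \<open>E v u2\<close> sym by (auto simp: gwalk_iff_successively successively_append_iff
        dest: sympD)
  then have "gwalk V E cyc"
    using ys(2) ys_Cons \<open>E v u1\<close> \<open>set ys \<subseteq> V\<close> \<open>v \<in> V\<close> by (simp add: cyc_def gwalk_iff_successively)
  moreover have "length cyc \<ge> 4" using ys_Cons \<open>ys' \<noteq> []\<close> by (cases ys') (auto simp: cyc_def)
  moreover have "distinct (tl cyc)" using ys(4) \<open>v \<notin> set ys\<close> by (simp add: cyc_def)
  ultimately have "gcycle V E cyc" by (simp add: gcycle_def cyc_def)
  then show False using tree unfolding gtree_def by blast
qed

lemma tree_remove_vertex_disconnected_iff:
  assumes sym: "symp E" and tree: "gtree V E" and "v \<in> V"
  shows "\<not> gconnected (remove_vertex V E v) E \<longleftrightarrow>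
    (\<exists>u1 u2. u1 \<noteq> u2 \<and> E v u1 \<and> E v u2 \<and>
      u1 \<in> remove_vertex V E v \<and> u2 \<in> remove_vertex V E v)"
  using remove_vertex_disconnected_neighbours[OF sym] tree_remove_vertex_disconnected[OF sym tree]
    assms(3) tree unfolding gtree_def by metis

section \<open>Extension graphs\<close>

lemma ext_adj_symp: "symp (ext_adj X w)"
proof (rule sympI)
  fix u v assume "ext_adj X w u v"
  then show "ext_adj X w v u" by (cases u; cases v) auto
qed

lemma ext_adj_Inl: "ext_adj X w (Inl a) v \<longleftrightarrow> (\<exists>b. v = Inr b \<and> a # w @ [b] \<in> lang X)"
  by (cases v) auto

lemma ext_adj_Inr: "ext_adj X w (Inr b) v \<longleftrightarrow> (\<exists>a. v = Inl a \<and> a # w @ [b] \<in> lang X)"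
  by (cases v) auto

lemma lang_extensionD:
  assumes "a # w @ [b] \<in> lang X"
  shows "w \<in> lang X" "a \<in> ext_left X w" "b \<in> ext_right X w"
  using lang_sublist[OF sublist_appendI[of w "[a]" "[b]"]]
    lang_sublist[OF sublist_appendI[of "a # w" "[]" "[b]"]]
    lang_sublist[OF sublist_appendI[of "w @ [b]" "[a]" "[]"]] assms
  by (simp_all add: ext_left_def ext_right_def)

lemma Inr_in_remove_Inl:
  "Inr b \<in> remove_vertex (ext_vertices X w) (ext_adj X w) (Inl a) \<longleftrightarrow>
    (\<exists>a'. a' \<noteq> a \<and> a' # w @ [b] \<in> lang X)"
proof
  assume "\<exists>a'. a' \<noteq> a \<and> a' # w @ [b] \<in> lang X"
  then obtain a' where "a' \<noteq> a" "a' # w @ [b] \<in> lang X" by blast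
  moreover from lang_extensionD[OF this(2)]
  have "Inl a' \<in> ext_vertices X w" "Inr b \<in> ext_vertices X w" by (auto simp: ext_vertices_def)
  ultimately show "Inr b \<in> remove_vertex (ext_vertices X w) (ext_adj X w) (Inl a)"
    unfolding remove_vertex_def by force
qed (auto simp: remove_vertex_def ext_adj_Inr)

lemma Inl_in_remove_Inr:
  "Inl a \<in> remove_vertex (ext_vertices X w) (ext_adj X w) (Inr b) \<longleftrightarrow>
    (\<exists>b'. b' \<noteq> b \<and> a # w @ [b'] \<in> lang X)"
proof
  assume "\<exists>b'. b' \<noteq> b \<and> a # w @ [b'] \<in> lang X"
  then obtain b' where "b' \<noteq> b" "a # w @ [b'] \<in> lang X" by blast
  moreover from lang_extensionD[OF this(2)]
  have "Inl a \<in> ext_vertices X w" "Inr b' \<in> ext_vertices X w" by (auto simp: ext_vertices_def)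
  ultimately show "Inl a \<in> remove_vertex (ext_vertices X w) (ext_adj X w) (Inr b)"
    unfolding remove_vertex_def by force
qed (auto simp: remove_vertex_def ext_adj_Inl)

lemma C_left_word_iff:
  assumes "dendric_word X w"
  shows "a \<in> C_left_word X w \<longleftrightarrow>
    (\<exists>b1 b2 a1 a2. b1 \<noteq> b2 \<and> a1 \<noteq> a \<and> a2 \<noteq> a \<and>
      a # w @ [b1] \<in> lang X \<and> a # w @ [b2] \<in> lang X \<and>
      a1 # w @ [b1] \<in> lang X \<and> a2 # w @ [b2] \<in> lang X)" (is "_ \<longleftrightarrow> ?pattern")
proof -
  let ?V = "ext_vertices X w" and ?E = "ext_adj X w"
  have tree: "gtree ?V ?E" using assms by (simp add: dendric_word_def)
  have "a \<in> C_left_word X w \<longleftrightarrow>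
      Inl a \<in> ?V \<and> \<not> gconnected (remove_vertex ?V ?E (Inl a)) ?E"
    by (simp add: C_left_word_def ext_vertices_def image_iff)
  also have "\<dots> \<longleftrightarrow> Inl a \<in> ?V \<and> (\<exists>u1 u2. u1 \<noteq> u2 \<and> ?E (Inl a) u1 \<and> ?E (Inl a) u2 \<and>
      u1 \<in> remove_vertex ?V ?E (Inl a) \<and> u2 \<in> remove_vertex ?V ?E (Inl a))"
    by (rule conj_cong[OF refl tree_remove_vertex_disconnected_iff[OF ext_adj_symp tree]])
  also have "\<dots> \<longleftrightarrow> Inl a \<in> ?V \<and> (\<exists>b1 b2. b1 \<noteq> b2 \<and> a # w @ [b1] \<in> lang X \<and>
      a # w @ [b2] \<in> lang X \<and> Inr b1 \<in> remove_vertex ?V ?E (Inl a) \<and>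
      Inr b2 \<in> remove_vertex ?V ?E (Inl a))"
    unfolding ext_adj_Inl by blast
  also have "\<dots> \<longleftrightarrow> ?pattern"
    unfolding Inr_in_remove_Inl by (auto simp: ext_vertices_def dest: lang_extensionD(2))
  finally show ?thesis .
qed

lemma C_right_word_iff:
  assumes "dendric_word X w"
  shows "b \<in> C_right_word X w \<longleftrightarrow>
    (\<exists>a1 a2 b1 b2. a1 \<noteq> a2 \<and> b1 \<noteq> b \<and> b2 \<noteq> b \<and>
      a1 # w @ [b] \<in> lang X \<and> a2 # w @ [b] \<in> lang X \<and>
      a1 # w @ [b1] \<in> lang X \<and> a2 # w @ [b2] \<in> lang X)" (is "_ \<longleftrightarrow> ?pattern")
proof -
  let ?V = "ext_vertices X w" and ?E = "ext_adj X w"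
  have tree: "gtree ?V ?E" using assms by (simp add: dendric_word_def)
  have "b \<in> C_right_word X w \<longleftrightarrow>
      Inr b \<in> ?V \<and> \<not> gconnected (remove_vertex ?V ?E (Inr b)) ?E"
    by (simp add: C_right_word_def ext_vertices_def image_iff)
  also have "\<dots> \<longleftrightarrow> Inr b \<in> ?V \<and> (\<exists>u1 u2. u1 \<noteq> u2 \<and> ?E (Inr b) u1 \<and> ?E (Inr b) u2 \<and>
      u1 \<in> remove_vertex ?V ?E (Inr b) \<and> u2 \<in> remove_vertex ?V ?E (Inr b))"
    by (rule conj_cong[OF refl tree_remove_vertex_disconnected_iff[OF ext_adj_symp tree]])
  also have "\<dots> \<longleftrightarrow> Inr b \<in> ?V \<and> (\<exists>a1 a2. a1 \<noteq> a2 \<and> a1 # w @ [b] \<in> lang X \<and>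
      a2 # w @ [b] \<in> lang X \<and> Inl a1 \<in> remove_vertex ?V ?E (Inr b) \<and>
      Inl a2 \<in> remove_vertex ?V ?E (Inr b))"
    unfolding ext_adj_Inr by blast
  also have "\<dots> \<longleftrightarrow> ?pattern"
    unfolding Inl_in_remove_Inr by (auto simp: ext_vertices_def dest: lang_extensionD(3))
  finally show ?thesis .
qed

lemma C_leftE:
  assumes "dendric_shift X" "a \<in> C_left X"
  obtains w b1 b2 a1 a2 where "b1 \<noteq> b2" "a1 \<noteq> a" "a2 \<noteq> a"
    "a # w @ [b1] \<in> lang X" "a # w @ [b2] \<in> lang X"
    "a1 # w @ [b1] \<in> lang X" "a2 # w @ [b2] \<in> lang X"
  using assms C_left_word_iff unfolding C_left_def dendric_shift_def by blast

lemma C_rightE: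
  assumes "dendric_shift X" "b \<in> C_right X"
  obtains w a1 a2 b1 b2 where "a1 \<noteq> a2" "b1 \<noteq> b" "b2 \<noteq> b"
    "a1 # w @ [b] \<in> lang X" "a2 # w @ [b] \<in> lang X"
    "a1 # w @ [b1] \<in> lang X" "a2 # w @ [b2] \<in> lang X"
  using assms C_right_word_iff unfolding C_right_def dendric_shift_def by blast

lemma extended_imageI:
  assumes "a # w @ [b] \<in> lang X" "strict_suffix s (\<sigma> a)" "p \<noteq> []" "prefix p (\<sigma> b)" "1 \<in> set p"
    and "s @ concat (map \<sigma> w) @ p \<in> lang (subst_image \<sigma> X)"
  shows "extended_image \<sigma> X (s @ concat (map \<sigma> w) @ p) w"
proof -
  have "s @ concat (map \<sigma> w) @ p \<noteq> []" "1 \<in> set (s @ concat (map \<sigma> w) @ p)"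
    using assms(3,5) by auto
  then show ?thesis using assms lang_extensionD(1)[OF assms(1)] unfolding extended_image_def by blast
qed

lemma C_left_subst_image_if_extensions:
  assumes DP: "\<sigma> \<in> DP X" and ext: "extended_image \<sigma> X u w"
    and "b1 \<noteq> b2" "a1 \<noteq> a" "a2 \<noteq> a"
    and "a # w @ [b1] \<in> lang X" "a # w @ [b2] \<in> lang X"
    and "a1 # w @ [b1] \<in> lang X" "a2 # w @ [b2] \<in> lang X"
    and image: "\<And>a' b. a' # w @ [b] \<in> lang X \<Longrightarrow> b \<in> {b1, b2} \<Longrightarrow>
      a' # u @ [g b] \<in> lang (subst_image \<sigma> X)"
    and "g b1 \<noteq> g b2"
  shows "a \<in> C_left (subst_image \<sigma> X)"
proof -
  let ?Y = "subst_image \<sigma> X"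
  have edges: "a # u @ [g b1] \<in> lang ?Y" "a # u @ [g b2] \<in> lang ?Y"
    "a1 # u @ [g b1] \<in> lang ?Y" "a2 # u @ [g b2] \<in> lang ?Y"
    using image assms(6-9) by auto
  then have "bispecial ?Y u"
    using lang_extensionD assms(4,11) unfolding bispecial_def by metis
  then have dendric: "dendric_word ?Y u" using DP ext unfolding DP_def extended_image_def by blast
  have "a \<in> C_left_word ?Y u"
    unfolding C_left_word_iff[OF dendric] using edges assms(4,5,11) by blast
  then show ?thesis using ext unfolding C_left_def extended_image_def by blast
qed

lemma C_right_subst_image_if_extensions:
  assumes DP: "\<sigma> \<in> DP X" and ext: "extended_image \<sigma> X u w"
    and "a1 \<noteq> a2" "b1 \<noteq> b" "b2 \<noteq> b"
    and "a1 # w @ [b] \<in> lang X" "a2 # w @ [b] \<in> lang X"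
    and "a1 # w @ [b1] \<in> lang X" "a2 # w @ [b2] \<in> lang X"
    and image: "\<And>a b'. a # w @ [b'] \<in> lang X \<Longrightarrow> a \<in> {a1, a2} \<Longrightarrow>
      f a # u @ [b'] \<in> lang (subst_image \<sigma> X)"
    and "f a1 \<noteq> f a2"
  shows "b \<in> C_right (subst_image \<sigma> X)"
proof -
  let ?Y = "subst_image \<sigma> X"
  have edges: "f a1 # u @ [b] \<in> lang ?Y" "f a2 # u @ [b] \<in> lang ?Y"
    "f a1 # u @ [b1] \<in> lang ?Y" "f a2 # u @ [b2] \<in> lang ?Y"
    using image assms(6-9) by auto
  then have "bispecial ?Y u"
    using lang_extensionD assms(4,11) unfolding bispecial_def by metis
  then have dendric: "dendric_word ?Y u" using DP ext unfolding DP_def extended_image_def by blast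
  have "b \<in> C_right_word ?Y u"
    unfolding C_right_word_iff[OF dendric] using edges assms(4,5,11) by blast
  then show ?thesis using ext unfolding C_right_def extended_image_def by blast
qed

text \<open>\<open>L\<close> and \<open>R\<close> describe a union of connected components of the extension graph of the
  empty word with \<open>a\<^sup>-\<close> removed, containing \<open>l\<^sup>-\<close> but not \<open>l'\<^sup>-\<close>.\<close>

lemma C_left_if_separated:
  assumes "[a, e] \<in> lang Y" "[l, r] \<in> lang Y" "[l', r'] \<in> lang Y" "l \<noteq> a" "l' \<noteq> a"
    and "l \<in> L" "l' \<notin> L"
    and separated: "\<And>c d. [c, d] \<in> lang Y \<Longrightarrow> c \<noteq> a \<Longrightarrow> c \<in> L \<longleftrightarrow> d \<in> R"
  shows "a \<in> C_left Y"
proof -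
  let ?V = "ext_vertices Y []" and ?E = "ext_adj Y []"
  let ?R = "remove_vertex ?V ?E (Inl a)" and ?S = "Inl ` (L - {a}) \<union> Inr ` R"
  have edge: "[c, d] \<in> lang Y \<Longrightarrow> Inl c \<in> ?V \<and> Inr d \<in> ?V \<and> ?E (Inl c) (Inr d)" for c d
    using lang_extensionD[of c "[]" d] by (simp add: ext_vertices_def)
  have "Inl c \<in> ?R" if "[c, d] \<in> lang Y" "c \<noteq> a" for c d
    using edge[OF that(1)] that(2) sum.distinct(2)[of d a] unfolding remove_vertex_def by blast
  then have "Inl l \<in> ?R" "Inl l' \<in> ?R" using assms(2-5) by blast+
  moreover have "last xs \<noteq> Inl l'" if "gwalk ?R ?E xs" "hd xs = Inl l" for xs
  proof -
    have "last xs \<in> ?S"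
    proof (rule gwalk_last_in_closed[OF that(1)])
      show "hd xs \<in> ?S" using that(2) assms(4,6) by simp
    next
      fix u v assume "u \<in> ?S" "v \<in> ?R" "?E u v"
      then have "v \<noteq> Inl a" by (simp add: remove_vertex_def)
      from \<open>?E u v\<close> consider c d where "u = Inl c" "v = Inr d" "[c, d] \<in> lang Y"
        | c d where "u = Inr d" "v = Inl c" "[c, d] \<in> lang Y"
        by (cases u; cases v) auto
      then show "v \<in> ?S"
        by cases (use \<open>u \<in> ?S\<close> \<open>v \<noteq> Inl a\<close> separated in force)+
    qed
    then show ?thesis using assms(7) by auto
  qed
  ultimately have "\<not> gconnected ?R ?E" unfolding gconnected_def by blast
  moreover have "[] \<in> lang Y" "a \<in> ext_left Y []"
    using lang_extensionD[of a "[]" e] assms(1) by auto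
  ultimately show ?thesis unfolding C_left_def C_left_word_def by blast
qed

lemma C_right_if_separated:
  assumes "[e, b] \<in> lang Y" "[l, r] \<in> lang Y" "[l', r'] \<in> lang Y" "r \<noteq> b" "r' \<noteq> b"
    and "r \<in> R" "r' \<notin> R"
    and separated: "\<And>c d. [c, d] \<in> lang Y \<Longrightarrow> d \<noteq> b \<Longrightarrow> c \<in> L \<longleftrightarrow> d \<in> R"
  shows "b \<in> C_right Y"
proof -
  let ?V = "ext_vertices Y []" and ?E = "ext_adj Y []"
  let ?R = "remove_vertex ?V ?E (Inr b)" and ?S = "Inl ` L \<union> Inr ` (R - {b})"
  have edge: "[c, d] \<in> lang Y \<Longrightarrow> Inl c \<in> ?V \<and> Inr d \<in> ?V \<and> ?E (Inl c) (Inr d)" for c d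
    using lang_extensionD[of c "[]" d] by (simp add: ext_vertices_def)
  have "Inr d \<in> ?R" if "[c, d] \<in> lang Y" "d \<noteq> b" for c d
    using edge[OF that(1)] that(2) sum.distinct(1)[of c b] sympD[OF ext_adj_symp]
    unfolding remove_vertex_def by blast
  then have "Inr r \<in> ?R" "Inr r' \<in> ?R" using assms(2-5) by blast+
  moreover have "last xs \<noteq> Inr r'" if "gwalk ?R ?E xs" "hd xs = Inr r" for xs
  proof -
    have "last xs \<in> ?S"
    proof (rule gwalk_last_in_closed[OF that(1)])
      show "hd xs \<in> ?S" using that(2) assms(4,6) by simp
    next
      fix u v assume "u \<in> ?S" "v \<in> ?R" "?E u v"
      then have "v \<noteq> Inr b" by (simp add: remove_vertex_def)
      from \<open>?E u v\<close> consider c d where "u = Inl c" "v = Inr d" "[c, d] \<in> lang Y"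
        | c d where "u = Inr d" "v = Inl c" "[c, d] \<in> lang Y"
        by (cases u; cases v) auto
      then show "v \<in> ?S"
        by cases (use \<open>u \<in> ?S\<close> \<open>v \<noteq> Inr b\<close> separated in force)+
    qed
    then show ?thesis using assms(7) by auto
  qed
  ultimately have "\<not> gconnected ?R ?E" unfolding gconnected_def by blast
  moreover have "[] \<in> lang Y" "b \<in> ext_right Y []"
    using lang_extensionD[of e "[]" b] assms(1) by auto
  ultimately show ?thesis unfolding C_right_def C_right_word_def by blast
qed

section \<open>The substitutions of \<open>S\<^sub>3\<close>\<close>

lemma alpha_in_S3: "alpha_s \<in> S3"
  and beta_in_S3: "beta_s \<in> S3"
  and gamma_in_S3: "gamma_s \<in> S3"
  and eta_in_S3: "eta_s \<in> S3"
  and delta_in_S3: "k \<ge> 1 \<Longrightarrow> delta_s k \<in> S3"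
  and zeta_in_S3: "k \<ge> 1 \<Longrightarrow> zeta_s k \<in> S3"
  by (auto simp: S3_def)

lemma sublist_pair_Cons_Cons:
  "sublist [c, d] (x # y # zs) \<longleftrightarrow> c = x \<and> d = y \<or> sublist [c, d] (y # zs)"
  by (auto simp: sublist_Cons_right)

lemma sublist_pair_singleton: "\<not> sublist [c, d] [x]"
  by (auto simp: sublist_Cons_right)

lemma sublist_pair_replicate:
  "sublist [c, d] (e # replicate n e @ [f]) \<longleftrightarrow> c = e \<and> (d = f \<or> 0 < n \<and> d = e)"
  by (induction n) (auto simp: sublist_pair_Cons_Cons sublist_pair_singleton)

lemmas sublist_pair_simps = sublist_pair_Cons_Cons sublist_pair_singleton sublist_pair_replicate

lemma beta_image_two_factors:
  assumes "shift_space {1,2,3} X"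
  shows "[c, d] \<in> lang (subst_image beta_s X) \<longleftrightarrow> (c, d) \<in> {(1,1), (1,2), (2,1), (1,3), (3,2)}"
  using two_factors_subst_image_iff[OF assms S3_images_start_with_1[OF beta_in_S3]]
  by (auto simp: beta_s_def subst3_def sublist_pair_simps)

lemma gamma_image_two_factors:
  assumes "shift_space {1,2,3} X"
  shows "[c, d] \<in> lang (subst_image gamma_s X) \<longleftrightarrow> (c, d) \<in> {(1,1), (1,2), (2,1), (2,3), (3,1)}"
  using two_factors_subst_image_iff[OF assms S3_images_start_with_1[OF gamma_in_S3]]
  by (auto simp: gamma_s_def subst3_def sublist_pair_simps)

lemma eta_image_two_factors:
  assumes "shift_space {1,2,3} X"
  shows "[c, d] \<in> lang (subst_image eta_s X) \<longleftrightarrow> (c, d) \<in> {(1,3), (3,1), (1,2), (2,1), (2,3)}"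
  using two_factors_subst_image_iff[OF assms S3_images_start_with_1[OF eta_in_S3]]
  by (auto simp: eta_s_def subst3_def sublist_pair_simps)

lemma delta_image_two_factors:
  assumes "shift_space {1,2,3} X" "k \<ge> 1"
  shows "[c, d] \<in> lang (subst_image (delta_s k) X) \<longleftrightarrow> (c, d) \<in> {(1,1), (1,2), (2,3), (3,3), (3,1)}"
proof -
  obtain n where "k = Suc n" using assms(2) by (cases k) auto
  then show ?thesis
    using two_factors_subst_image_iff[OF assms(1) S3_images_start_with_1[OF delta_in_S3[OF assms(2)]]]
    by (auto simp: delta_s_def subst3_def sublist_pair_simps)
qed

lemma zeta_image_two_factors:
  assumes "shift_space {1,2,3} X" "k \<ge> 1"
  shows "[c, d] \<in> lang (subst_image (zeta_s k) X) \<longleftrightarrow> (c, d) \<in> {(1,3), (3,3), (3,1), (1,2), (2,1)}"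
proof -
  obtain n where "k = Suc n" using assms(2) by (cases k) auto
  then show ?thesis
    using two_factors_subst_image_iff[OF assms(1) S3_images_start_with_1[OF zeta_in_S3[OF assms(2)]]]
    by (auto simp: zeta_s_def subst3_def sublist_pair_simps)
qed

lemma C_left_beta_image: "shift_space {1,2,3} X \<Longrightarrow> 1 \<in> C_left (subst_image beta_s X)"
  by (rule C_left_if_separated[where e=1 and l=2 and r=1 and l'=3 and r'=2 and L="{2}" and R="{1}"])
    (auto simp: beta_image_two_factors)

lemma C_left_delta_image: "shift_space {1,2,3} X \<Longrightarrow> k \<ge> 1 \<Longrightarrow> 3 \<in> C_left (subst_image (delta_s k) X)"
  by (rule C_left_if_separated[where e=1 and l=1 and r=1 and l'=2 and r'=3 and L="{1}" and R="{1,2}"])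
    (auto simp: delta_image_two_factors)

lemma C_left_zeta_image: "shift_space {1,2,3} X \<Longrightarrow> k \<ge> 1 \<Longrightarrow> 3 \<in> C_left (subst_image (zeta_s k) X)"
  by (rule C_left_if_separated[where e=3 and l=1 and r=2 and l'=2 and r'=1 and L="{1}" and R="{2,3}"])
    (auto simp: zeta_image_two_factors)

lemma C_left_eta_image: "shift_space {1,2,3} X \<Longrightarrow> 2 \<in> C_left (subst_image eta_s X)"
  by (rule C_left_if_separated[where e=1 and l=1 and r=2 and l'=3 and r'=1 and L="{1}" and R="{2,3}"])
    (auto simp: eta_image_two_factors)

lemma C_right_gamma_image: "shift_space {1,2,3} X \<Longrightarrow> 1 \<in> C_right (subst_image gamma_s X)"
  by (rule C_right_if_separated[where e=1 and l=1 and r=2 and l'=2 and r'=3 and L="{1}" and R="{2}"])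
    (auto simp: gamma_image_two_factors)

lemma C_right_delta_image: "shift_space {1,2,3} X \<Longrightarrow> k \<ge> 1 \<Longrightarrow> 1 \<in> C_right (subst_image (delta_s k) X)"
  by (rule C_right_if_separated[where e=1 and l=1 and r=2 and l'=2 and r'=3 and L="{1}" and R="{2}"])
    (auto simp: delta_image_two_factors)

lemma C_right_zeta_image: "shift_space {1,2,3} X \<Longrightarrow> k \<ge> 1 \<Longrightarrow> 3 \<in> C_right (subst_image (zeta_s k) X)"
  by (rule C_right_if_separated[where e=1 and l=1 and r=2 and l'=2 and r'=1 and L="{1}" and R="{2}"])
    (auto simp: zeta_image_two_factors)

lemma C_right_eta_image: "shift_space {1,2,3} X \<Longrightarrow> 3 \<in> C_right (subst_image eta_s X)"
  by (rule C_right_if_separated[where e=1 and l=1 and r=2 and l'=2 and r'=1 and L="{1}" and R="{2}"])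
    (auto simp: eta_image_two_factors)

lemma alpha_extension:
  assumes ss: "shift_space {1,2,3} X" and ext: "a # w @ [b] \<in> lang X"
  shows "a # (concat (map alpha_s w) @ [1]) @ [b] \<in> lang (subst_image alpha_s X)"
  using image_of_extension_in_lang[OF ss S3_images_start_with_1[OF alpha_in_S3] ext,
      of "length (alpha_s a) - 1" 2] lang_subset_alphabet[OF ss ext]
  by (auto simp: alpha_s_def subst3_def)

lemma gamma_extension:
  assumes ss: "shift_space {1,2,3} X" and ext: "a # w @ [b] \<in> lang X"
  shows "a # (concat (map gamma_s w) @ [1]) @ [if b = 1 then 1 else 2]
      \<in> lang (subst_image gamma_s X)"
    and "b \<noteq> 1 \<Longrightarrow> a # (concat (map gamma_s w) @ [1, 2]) @ [if b = 2 then 1 else 3]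
      \<in> lang (subst_image gamma_s X)"
  using image_of_extension_in_lang[OF ss S3_images_start_with_1[OF gamma_in_S3] ext,
      of "length (gamma_s a) - 1" 2]
    image_of_extension_in_lang[OF ss S3_images_start_with_1[OF gamma_in_S3] ext,
      of "length (gamma_s a) - 1" 3]
    lang_subset_alphabet[OF ss ext]
  by (auto simp: gamma_s_def subst3_def)

lemma beta_extension:
  assumes ss: "shift_space {1,2,3} X" and ext: "a # w @ [b] \<in> lang X"
  shows "(if a = 1 then 1 else 2) # (concat (map beta_s w) @ [1]) @ [b]
      \<in> lang (subst_image beta_s X)"
    and "a \<noteq> 1 \<Longrightarrow> (if a = 2 then 1 else 3) # ([2] @ concat (map beta_s w) @ [1]) @ [b]
      \<in> lang (subst_image beta_s X)"
  using image_of_extension_in_lang[OF ss S3_images_start_with_1[OF beta_in_S3] ext,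
      of "length (beta_s a) - 1" 2]
    image_of_extension_in_lang[OF ss S3_images_start_with_1[OF beta_in_S3] ext,
      of "length (beta_s a) - 2" 2]
    lang_subset_alphabet[OF ss ext]
  by (auto simp: beta_s_def subst3_def)

lemma C_left_subset_alpha_image:
  assumes ss: "shift_space {1,2,3} X" and dendric: "dendric_shift X" and DP: "alpha_s \<in> DP X"
  shows "C_left X \<subseteq> C_left (subst_image alpha_s X)"
proof
  fix a assume "a \<in> C_left X"
  with dendric obtain w b1 b2 a1 a2 where pattern: "b1 \<noteq> b2" "a1 \<noteq> a" "a2 \<noteq> a"
    "a # w @ [b1] \<in> lang X" "a # w @ [b2] \<in> lang X"
    "a1 # w @ [b1] \<in> lang X" "a2 # w @ [b2] \<in> lang X"
    by (rule C_leftE)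
  \<comment> \<open>the shape \<open>s @ \<sigma>(w) @ p\<close> of an extended image, here with \<open>s = []\<close>\<close>
  let ?u = "[] @ concat (map alpha_s w) @ [1]"
  have image: "a' # ?u @ [b] \<in> lang (subst_image alpha_s X)"
    if "a' # w @ [b] \<in> lang X" "b \<in> {b1, b2}" for a' b
    using alpha_extension[OF ss that(1)] by simp
  have "a \<in> {1,2,3}" "b1 \<in> {1,2,3}" using lang_subset_alphabet[OF ss pattern(4)] by auto
  then have "extended_image alpha_s X ?u w"
    using lang_extensionD(1)[OF alpha_extension[OF ss pattern(4)]]
    by (intro extended_imageI[OF pattern(4)]) (auto simp: alpha_s_def subst3_def strict_suffix_def)
  from C_left_subst_image_if_extensions[OF DP this pattern image]
  show "a \<in> C_left (subst_image alpha_s X)" using pattern(1) by simp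
qed

lemma C_right_subset_alpha_image:
  assumes ss: "shift_space {1,2,3} X" and dendric: "dendric_shift X" and DP: "alpha_s \<in> DP X"
  shows "C_right X \<subseteq> C_right (subst_image alpha_s X)"
proof
  fix b assume "b \<in> C_right X"
  with dendric obtain w a1 a2 b1 b2 where pattern: "a1 \<noteq> a2" "b1 \<noteq> b" "b2 \<noteq> b"
    "a1 # w @ [b] \<in> lang X" "a2 # w @ [b] \<in> lang X"
    "a1 # w @ [b1] \<in> lang X" "a2 # w @ [b2] \<in> lang X"
    by (rule C_rightE)
  let ?u = "[] @ concat (map alpha_s w) @ [1]"
  have image: "a # ?u @ [b'] \<in> lang (subst_image alpha_s X)"
    if "a # w @ [b'] \<in> lang X" "a \<in> {a1, a2}" for a b'
    using alpha_extension[OF ss that(1)] by simp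
  have "a1 \<in> {1,2,3}" "b \<in> {1,2,3}" using lang_subset_alphabet[OF ss pattern(4)] by auto
  then have "extended_image alpha_s X ?u w"
    using lang_extensionD(1)[OF alpha_extension[OF ss pattern(4)]]
    by (intro extended_imageI[OF pattern(4)]) (auto simp: alpha_s_def subst3_def strict_suffix_def)
  from C_right_subst_image_if_extensions[OF DP this pattern image]
  show "b \<in> C_right (subst_image alpha_s X)" using pattern(1) by simp
qed

lemma C_left_subset_gamma_image:
  assumes ss: "shift_space {1,2,3} X" and dendric: "dendric_shift X" and DP: "gamma_s \<in> DP X"
  shows "C_left X \<subseteq> C_left (subst_image gamma_s X)"
proof
  fix a assume "a \<in> C_left X"
  with dendric obtain w b1 b2 a1 a2 where pattern: "b1 \<noteq> b2" "a1 \<noteq> a" "a2 \<noteq> a"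
    "a # w @ [b1] \<in> lang X" "a # w @ [b2] \<in> lang X"
    "a1 # w @ [b1] \<in> lang X" "a2 # w @ [b2] \<in> lang X"
    by (rule C_leftE)
  have letters: "a \<in> {1,2,3}" "b1 \<in> {1,2,3}" "b2 \<in> {1,2,3}"
    using lang_subset_alphabet[OF ss pattern(4)] lang_subset_alphabet[OF ss pattern(5)] by auto
  show "a \<in> C_left (subst_image gamma_s X)"
  proof (cases "b1 = 1 \<or> b2 = 1")
    case True
    let ?u = "[] @ concat (map gamma_s w) @ [1]"
    have image: "a' # ?u @ [if b = 1 then 1 else 2] \<in> lang (subst_image gamma_s X)"
      if "a' # w @ [b] \<in> lang X" "b \<in> {b1, b2}" for a' b
      using gamma_extension(1)[OF ss that(1)] by simp
    have "extended_image gamma_s X ?u w"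
      using letters lang_extensionD(1)[OF gamma_extension(1)[OF ss pattern(4)]]
      by (intro extended_imageI[OF pattern(4)]) (auto simp: gamma_s_def subst3_def strict_suffix_def)
    from C_left_subst_image_if_extensions[OF DP this pattern image]
    show ?thesis using True pattern(1) by auto
  next
    case False
    let ?u = "[] @ concat (map gamma_s w) @ [1, 2]"
    have image: "a' # ?u @ [if b = 2 then 1 else 3] \<in> lang (subst_image gamma_s X)"
      if "a' # w @ [b] \<in> lang X" "b \<in> {b1, b2}" for a' b
      using gamma_extension(2)[OF ss that(1)] that(2) False by auto
    have "extended_image gamma_s X ?u w"
      using letters False lang_extensionD(1)[OF gamma_extension(2)[OF ss pattern(4)]]
      by (intro extended_imageI[OF pattern(4)]) (auto simp: gamma_s_def subst3_def strict_suffix_def)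
    from C_left_subst_image_if_extensions[OF DP this pattern image]
    show ?thesis using False letters pattern(1) by auto
  qed
qed

lemma C_right_subset_beta_image:
  assumes ss: "shift_space {1,2,3} X" and dendric: "dendric_shift X" and DP: "beta_s \<in> DP X"
  shows "C_right X \<subseteq> C_right (subst_image beta_s X)"
proof
  fix b assume "b \<in> C_right X"
  with dendric obtain w a1 a2 b1 b2 where pattern: "a1 \<noteq> a2" "b1 \<noteq> b" "b2 \<noteq> b"
    "a1 # w @ [b] \<in> lang X" "a2 # w @ [b] \<in> lang X"
    "a1 # w @ [b1] \<in> lang X" "a2 # w @ [b2] \<in> lang X"
    by (rule C_rightE)
  have letters: "a1 \<in> {1,2,3}" "a2 \<in> {1,2,3}" "b \<in> {1,2,3}"
    using lang_subset_alphabet[OF ss pattern(4)] lang_subset_alphabet[OF ss pattern(5)] by auto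
  show "b \<in> C_right (subst_image beta_s X)"
  proof (cases "a1 = 1 \<or> a2 = 1")
    case True
    let ?u = "[] @ concat (map beta_s w) @ [1]"
    have image: "(if a = 1 then 1 else 2) # ?u @ [b'] \<in> lang (subst_image beta_s X)"
      if "a # w @ [b'] \<in> lang X" "a \<in> {a1, a2}" for a b'
      using beta_extension(1)[OF ss that(1)] by simp
    have "extended_image beta_s X ?u w"
      using letters lang_extensionD(1)[OF beta_extension(1)[OF ss pattern(4)]]
      by (intro extended_imageI[OF pattern(4)]) (auto simp: beta_s_def subst3_def strict_suffix_def)
    from C_right_subst_image_if_extensions[OF DP this pattern image]
    show ?thesis using True pattern(1) by auto
  next
    case False
    let ?u = "[2] @ concat (map beta_s w) @ [1]"
    have image: "(if a = 2 then 1 else 3) # ?u @ [b'] \<in> lang (subst_image beta_s X)"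
      if "a # w @ [b'] \<in> lang X" "a \<in> {a1, a2}" for a b'
      using beta_extension(2)[OF ss that(1)] that(2) False by auto
    have "extended_image beta_s X ?u w"
      using letters False lang_extensionD(1)[OF beta_extension(2)[OF ss pattern(4)]]
      by (intro extended_imageI[OF pattern(4)])
        (auto simp: beta_s_def subst3_def strict_suffix_def suffix_def)
    from C_right_subst_image_if_extensions[OF DP this pattern image]
    show ?thesis using False letters pattern(1) by auto
  qed
qed

lemma left_invariant_alpha: "left_invariant alpha_s"
  by (simp add: left_invariant_def alpha_s_def subst3_def lcs_def)

lemma right_invariant_alpha: "right_invariant alpha_s"
  by (simp add: right_invariant_def alpha_s_def subst3_def)

lemma right_invariant_beta: "right_invariant beta_s"
  by (simp add: right_invariant_def beta_s_def subst3_def)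

lemma left_invariant_gamma: "left_invariant gamma_s"
  by (simp add: left_invariant_def gamma_s_def subst3_def lcs_def)

theorem corollary5p9:
  fixes X :: "(int \<Rightarrow> nat) set" and \<sigma> :: "nat \<Rightarrow> nat list"
  assumes "shift_space {1,2,3} X"
    and "dendric_shift X"
    and "\<sigma> \<in> DP X"
  shows "(C_left (subst_image \<sigma> X) = {} \<longrightarrow> C_left X = {} \<and> left_invariant \<sigma>) \<and>
         (C_right (subst_image \<sigma> X) = {} \<longrightarrow> C_right X = {} \<and> right_invariant \<sigma>)"
proof -
  note ss = assms(1) and dendric = assms(2) and DP = assms(3)
  have "\<sigma> \<in> S3" using DP by (simp add: DP_def)
  then consider "\<sigma> = alpha_s" | "\<sigma> = beta_s" | "\<sigma> = gamma_s" | "\<sigma> = eta_s"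
    | k where "k \<ge> 1" "\<sigma> = delta_s k" | k where "k \<ge> 1" "\<sigma> = zeta_s k"
    unfolding S3_def by blast
  then show ?thesis
  proof cases
    case 1
    then show ?thesis
      using C_left_subset_alpha_image[OF ss dendric] C_right_subset_alpha_image[OF ss dendric]
        DP left_invariant_alpha right_invariant_alpha by auto
  next
    case 2
    then show ?thesis using C_left_beta_image[OF ss] C_right_subset_beta_image[OF ss dendric]
      DP right_invariant_beta by auto
  next
    case 3
    then show ?thesis using C_left_subset_gamma_image[OF ss dendric] C_right_gamma_image[OF ss]
      DP left_invariant_gamma by auto
  next
    case 4
    then show ?thesis using C_left_eta_image[OF ss] C_right_eta_image[OF ss] by auto
  next
    case 5
    then show ?thesis using C_left_delta_image[OF ss] C_right_delta_image[OF ss] by auto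
  next
    case 6
    then show ?thesis using C_left_zeta_image[OF ss] C_right_zeta_image[OF ss] by auto
  qed
qed

end
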